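(* The vectors $\{\Lambda_1,\dots,\Lambda_d\}$ form a basis for the space $\Psi^{-1}(\mathcal{D}\cap (I_{\mathcal{C}})_2)$.
   Context: Let $P_d$ be a convex polygon with $d\ge 4$ vertices $v_1,\dots,v_d$ (indices mod $d$) over a field $\mathbb{K}$ with no three edge lines concurrent. Set ${\bf v}_i=(v_i,1)$, ${\bf n}_i={\bf v}_i\times{\bf v}_{i+1}$, $\alpha_j=|{\bf v}_{j-1}\,{\bf v}_j\,{\bf v}_{j+1}|$. In $S=\mathbb{K}[x_1,\ldots,x_d]$ let $\tau=\sum_i x_i{\bf v}_i$, $I_{\mathcal{C}}=\langle\tau_1,\tau_2,\tau_3\rangle$, $\mathcal{D}\subseteq S_2$ the span of diagonal monomials $x_ix_j$ ($j\notin\{i-1,i,i+1\}$), $\Psi:S_1^3\to(I_{\mathcal{C}})_2$ the map $F\mapsto F\cdot\tau$ (scalar product), and $\Lambda_k=\frac{x_{k+1}}{\alpha_{k+1}}{\bf n}_{k+1}-\frac{x_k}{\alpha_k}{\bf n}_{k-1}\in S_1^3$. *)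

theory Defs
  imports Main
begin

(* Vertices are indexed 0..d-1 (the paper uses 1..d); all indices are read mod d. *)

type_synonym 'a vec3 = "'a \<times> 'a \<times> 'a"

definition det3 :: "'a::comm_ring_1 vec3 \<Rightarrow> 'a vec3 \<Rightarrow> 'a vec3 \<Rightarrow> 'a" where
  "det3 p q r = (case p of (a1, a2, a3) \<Rightarrow> case q of (b1, b2, b3) \<Rightarrow> case r of (c1, c2, c3) \<Rightarrow>
      a1 * (b2 * c3 - b3 * c2) - a2 * (b1 * c3 - b3 * c1) + a3 * (b1 * c2 - b2 * c1))"

definition cross3 :: "'a::comm_ring_1 vec3 \<Rightarrow> 'a vec3 \<Rightarrow> 'a vec3" where
  "cross3 p q = (case p of (a1, a2, a3) \<Rightarrow> case q of (b1, b2, b3) \<Rightarrow>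
      (a2 * b3 - a3 * b2, a3 * b1 - a1 * b3, a1 * b2 - a2 * b1))"

definition comp3 :: "'a::zero vec3 \<Rightarrow> nat \<Rightarrow> 'a" where
  "comp3 p c = (if c = 0 then fst p else if c = 1 then fst (snd p) else if c = 2 then snd (snd p) else 0)"

definition hvert :: "nat \<Rightarrow> (nat \<Rightarrow> 'a \<times> 'a) \<Rightarrow> nat \<Rightarrow> 'a::comm_ring_1 vec3" where
  "hvert d v i = (fst (v (i mod d)), snd (v (i mod d)), 1)"

definition nvec :: "nat \<Rightarrow> (nat \<Rightarrow> 'a \<times> 'a) \<Rightarrow> nat \<Rightarrow> 'a::comm_ring_1 vec3" where
  "nvec d v i = cross3 (hvert d v i) (hvert d v (Suc i))"

definition alpha :: "nat \<Rightarrow> (nat \<Rightarrow> 'a \<times> 'a) \<Rightarrow> nat \<Rightarrow> 'a::comm_ring_1" where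
  "alpha d v j = det3 (hvert d v (j + d - 1)) (hvert d v j) (hvert d v (Suc j))"

text \<open>Convex polygon with vertices \<open>v_0,\<dots>,v_{d-1}\<close> in cyclic order (either orientation):
  every other vertex lies strictly on the same side of each edge line.\<close>
definition convex_polygon :: "nat \<Rightarrow> (nat \<Rightarrow> 'a::linordered_field \<times> 'a) \<Rightarrow> bool" where
  "convex_polygon d v \<longleftrightarrow> 3 \<le> d \<and>
     ((\<forall>i<d. \<forall>k<d. k \<noteq> i \<and> k \<noteq> Suc i mod d \<longrightarrow> det3 (hvert d v i) (hvert d v (Suc i)) (hvert d v k) > 0) \<or>
      (\<forall>i<d. \<forall>k<d. k \<noteq> i \<and> k \<noteq> Suc i mod d \<longrightarrow> det3 (hvert d v i) (hvert d v (Suc i)) (hvert d v k) < 0))"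

definition no_three_edge_lines_concurrent :: "nat \<Rightarrow> (nat \<Rightarrow> 'a::comm_ring_1 \<times> 'a) \<Rightarrow> bool" where
  "no_three_edge_lines_concurrent d v \<longleftrightarrow>
     (\<forall>i<d. \<forall>j<d. \<forall>k<d. i \<noteq> j \<and> j \<noteq> k \<and> i \<noteq> k \<longrightarrow> det3 (nvec d v i) (nvec d v j) (nvec d v k) \<noteq> 0)"

text \<open>Polynomials in \<open>S = K[x_0,\<dots>,x_{d-1}]\<close> of degree 1 and 2 are represented by coefficients:
  a linear form is \<open>a :: nat \<Rightarrow> 'a\<close> (coefficient of \<open>x_i\<close>, zero for \<open>i \<ge> d\<close>);
  a quadratic form is \<open>Q :: nat \<Rightarrow> nat \<Rightarrow> 'a\<close>, where \<open>Q i j\<close> (for \<open>i \<le> j < d\<close>) is the coefficient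
  of the monomial \<open>x_i x_j\<close> and all other entries are zero.
  An element of \<open>S_1^3\<close> is \<open>F :: nat \<Rightarrow> nat \<Rightarrow> 'a\<close>, \<open>F c\<close> being the c-th component (c = 0,1,2).\<close>

definition S1cube :: "nat \<Rightarrow> (nat \<Rightarrow> nat \<Rightarrow> 'a::zero) set" where
  "S1cube d = {F. \<forall>c i. (3 \<le> c \<or> d \<le> i) \<longrightarrow> F c i = 0}"

definition qmul :: "(nat \<Rightarrow> 'a::comm_semiring_0) \<Rightarrow> (nat \<Rightarrow> 'a) \<Rightarrow> nat \<Rightarrow> nat \<Rightarrow> 'a" where
  "qmul a b = (\<lambda>i j. if i < j then a i * b j + a j * b i else if i = j then a i * b i else 0)"

text \<open>\<open>\<tau>_c = \<Sum>_i x_i (v_i,1)_c\<close>.\<close>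
definition tau :: "nat \<Rightarrow> (nat \<Rightarrow> 'a \<times> 'a) \<Rightarrow> nat \<Rightarrow> nat \<Rightarrow> 'a::comm_ring_1" where
  "tau d v c = (\<lambda>i. if i < d then comp3 (hvert d v i) c else 0)"

text \<open>\<open>\<Psi>(F) = F \<cdot> \<tau>\<close>.\<close>
definition Psi :: "nat \<Rightarrow> (nat \<Rightarrow> 'a \<times> 'a) \<Rightarrow> (nat \<Rightarrow> nat \<Rightarrow> 'a) \<Rightarrow> nat \<Rightarrow> nat \<Rightarrow> 'a::comm_ring_1" where
  "Psi d v F = (\<lambda>i j. \<Sum>c<3. qmul (F c) (tau d v c) i j)"

definition IC2 :: "nat \<Rightarrow> (nat \<Rightarrow> 'a \<times> 'a) \<Rightarrow> (nat \<Rightarrow> nat \<Rightarrow> 'a::comm_ring_1) set" where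
  "IC2 d v = {Q. \<exists>G\<in>S1cube d. Q = (\<lambda>i j. \<Sum>c<3. qmul (G c) (tau d v c) i j)}"

definition diag_mono :: "nat \<Rightarrow> nat \<Rightarrow> nat \<Rightarrow> bool" where
  "diag_mono d i j \<longleftrightarrow> i < j \<and> j < d \<and> j \<noteq> Suc i \<and> \<not> (i = 0 \<and> j = d - 1)"

definition Dspace :: "nat \<Rightarrow> (nat \<Rightarrow> nat \<Rightarrow> 'a::zero) set" where
  "Dspace d = {Q. \<forall>i j. \<not> diag_mono d i j \<longrightarrow> Q i j = 0}"

text \<open>\<open>\<Lambda>_k = (x_{k+1}/\<alpha>_{k+1}) n_{k+1} - (x_k/\<alpha>_k) n_{k-1}\<close>.\<close>
definition Lambda :: "nat \<Rightarrow> (nat \<Rightarrow> 'a \<times> 'a) \<Rightarrow> nat \<Rightarrow> nat \<Rightarrow> nat \<Rightarrow> 'a::field" where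
  "Lambda d v k = (\<lambda>c i.
      (if i = Suc k mod d then comp3 (nvec d v (Suc k)) c / alpha d v (Suc k) else 0)
    - (if i = k mod d then comp3 (nvec d v (k + d - 1)) c / alpha d v k else 0))"

definition PsiPre :: "nat \<Rightarrow> (nat \<Rightarrow> 'a \<times> 'a) \<Rightarrow> (nat \<Rightarrow> nat \<Rightarrow> 'a::comm_ring_1) set" where
  "PsiPre d v = {F \<in> S1cube d. Psi d v F \<in> Dspace d \<inter> IC2 d v}"

definition is_basis_family :: "nat \<Rightarrow> (nat \<Rightarrow> nat \<Rightarrow> nat \<Rightarrow> 'a::field) \<Rightarrow> (nat \<Rightarrow> nat \<Rightarrow> 'a) set \<Rightarrow> bool" where
  "is_basis_family n B W \<longleftrightarrow>
     (\<forall>k<n. B k \<in> W) \<and>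
     (\<forall>a. (\<lambda>c i. \<Sum>k<n. a k * B k c i) = (\<lambda>c i. 0) \<longrightarrow> (\<forall>k<n. a k = 0)) \<and>
     (\<forall>F\<in>W. \<exists>a. F = (\<lambda>c i. \<Sum>k<n. a k * B k c i))"

end

theory Submission
  imports Defs
begin

text \<open>Write \<open>F_i\<close> for the coefficient vector of \<open>x_i\<close> in \<open>F \<in> S_1^3\<close>. Since \<open>\<Psi>(F) \<in> (I_C)_2\<close>
  always, \<open>F\<close> lies in \<open>\<Psi>^{-1}(\<D> \<inter> (I_C)_2)\<close> iff the non-diagonal coefficients of \<open>\<Psi>(F)\<close> vanish:
  \<open>F_i \<cdot> v_i = 0\<close> and \<open>F_i \<cdot> v_{i+1} + F_{i+1} \<cdot> v_i = 0\<close>. The vector \<open>\<Lambda>_k\<close> has entries only at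
  \<open>x_k, x_{k+1}\<close>, and \<open>\<Lambda>_k|_i \<cdot> v_{i+1} = -\<delta>_{ik}\<close>, \<open>\<Lambda>_k|_{i+1} \<cdot> v_i = \<delta>_{ik}\<close>; so the \<open>\<Lambda>_k\<close>
  satisfy these conditions and are independent. Conversely, expanding \<open>F_i\<close> in the basis
  \<open>n_i, n_{i-1}, v_{i-1} \<times> v_{i+1}\<close> dual to \<open>v_{i-1}, v_{i+1}, v_i\<close> gives
  \<open>F = \<Sum>_k -(F_k \<cdot> v_{k+1}) \<Lambda>_k\<close>.\<close>

definition dot3 :: "'a::comm_ring_1 vec3 \<Rightarrow> 'a vec3 \<Rightarrow> 'a" where
  "dot3 p q = fst p * fst q + fst (snd p) * fst (snd q) + snd (snd p) * snd (snd q)"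

definition col :: "(nat \<Rightarrow> nat \<Rightarrow> 'a) \<Rightarrow> nat \<Rightarrow> 'a vec3" where
  "col F i = (F 0 i, F 1 i, F 2 i)"

definition cyc_pred :: "nat \<Rightarrow> nat \<Rightarrow> nat" where
  "cyc_pred d i = (i + d - 1) mod d"

lemma sum_lessThan_3: "(\<Sum>c<(3::nat). g c) = g 0 + g 1 + (g 2 :: 'a::comm_monoid_add)"
  by (simp add: numeral_3_eq_3 numeral_2_eq_2 add.commute add.left_commute)

lemma dot3_eq_sum_comp3: "dot3 p q = (\<Sum>c<3. comp3 p c * comp3 q c)"
  by (simp add: dot3_def sum_lessThan_3 comp3_def)

lemma dot3_col: "dot3 (col F i) q = (\<Sum>c<3. F c i * comp3 q c)"
  by (simp add: dot3_def col_def sum_lessThan_3 comp3_def)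

lemma dot3_cross3: "dot3 (cross3 a b) p = det3 a b p"
  by (cases a; cases b; cases p) (simp add: dot3_def cross3_def det3_def algebra_simps)

lemma det3_rotate: "det3 a b c = det3 b c (a::'a::comm_ring_1 vec3)"
  by (cases a; cases b; cases c) (simp add: det3_def algebra_simps)

lemma det3_repeated [simp]:
  "det3 a b b = 0" "det3 a b a = 0" "det3 a a b = (0::'a::comm_ring_1)"
  by (cases a; cases b; simp add: det3_def algebra_simps)+

lemma cross3_expansion:
  assumes "c < 3"
  shows "det3 u v w * comp3 f c = dot3 f u * comp3 (cross3 v w) c + dot3 f v * comp3 (cross3 w u) c
           + dot3 f w * comp3 (cross3 u v) c"
proof -
  obtain u1 u2 u3 v1 v2 v3 w1 w2 w3 f1 f2 f3 where
    "u = (u1, u2, u3)" "v = (v1, v2, v3)" "w = (w1, w2, w3)" "f = (f1, f2, f3)"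
    by (metis prod.exhaust)
  moreover have "c = 0 \<or> c = 1 \<or> c = 2" using assms by auto
  ultimately show ?thesis
    by (auto simp: dot3_def comp3_def cross3_def det3_def algebra_simps)
qed

lemma hvert_mod [simp]: "hvert d v (i mod d) = hvert d v i"
  by (simp add: hvert_def)

lemma hvert_Suc_mod [simp]: "hvert d v (Suc (i mod d)) = hvert d v (Suc i)"
  by (simp add: hvert_def mod_Suc_eq)

lemma hvert_add_self [simp]: "hvert d v (i + d) = hvert d v i"
  by (simp add: hvert_def)

lemma hvert_cyc_pred [simp]: "hvert d v (cyc_pred d i) = hvert d v (i + d - 1)"
  by (simp add: cyc_pred_def)

lemma cyc_pred_less: "0 < d \<Longrightarrow> cyc_pred d i < d"
  by (simp add: cyc_pred_def)

lemma Suc_mod_eq_iff_cyc_pred: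
  assumes "k < d" "i < d"
  shows "i = Suc k mod d \<longleftrightarrow> k = cyc_pred d i"
  using assms by (cases "Suc k = d"; cases "i = 0") (auto simp: cyc_pred_def mod_if)

lemma cyc_pred_Suc_mod: "i < d \<Longrightarrow> cyc_pred d (Suc i mod d) = i"
  using Suc_mod_eq_iff_cyc_pred[of i d "Suc i mod d"] by simp

lemma nvec_mod [simp]: "nvec d v (i mod d) = nvec d v i"
  by (simp add: nvec_def)

lemma nvec_pred: "0 < d \<Longrightarrow> nvec d v (i + d - 1) = cross3 (hvert d v (i + d - 1)) (hvert d v i)"
  by (simp add: nvec_def)

lemma alpha_mod [simp]: "0 < d \<Longrightarrow> alpha d v (j mod d) = alpha d v j"
proof -
  assume "0 < d"
  then have "(j mod d + d - 1) mod d = (j + d - 1) mod d"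
    using mod_add_left_eq[of j d "d - 1"] by simp
  then have "hvert d v (j mod d + d - 1) = hvert d v (j + d - 1)"
    by (metis hvert_mod)
  then show ?thesis by (simp add: alpha_def)
qed

lemma alpha_nonzero:
  fixes v :: "nat \<Rightarrow> 'a::linordered_field \<times> 'a"
  assumes conv: "convex_polygon d v" and "i < d"
  shows "alpha d v i \<noteq> 0"
proof -
  have d3: "3 \<le> d" using conv by (simp add: convex_polygon_def)
  have "alpha d v i = det3 (hvert d v i) (hvert d v (Suc i)) (hvert d v (cyc_pred d i))"
    by (simp add: alpha_def det3_rotate)
  moreover have "cyc_pred d i < d" "cyc_pred d i \<noteq> i" "cyc_pred d i \<noteq> Suc i mod d"
    using assms d3 by (auto simp: cyc_pred_def mod_if)
  ultimately show ?thesis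
    using conv \<open>i < d\<close> unfolding convex_polygon_def by fastforce
qed

lemma Psi_diag: "i < d \<Longrightarrow> Psi d v F i i = dot3 (col F i) (hvert d v i)"
  by (simp add: Psi_def qmul_def tau_def sum_lessThan_3 dot3_def col_def comp3_def algebra_simps)

lemma Psi_offdiag:
  "i < j \<Longrightarrow> j < d \<Longrightarrow> Psi d v F i j = dot3 (col F i) (hvert d v j) + dot3 (col F j) (hvert d v i)"
  by (simp add: Psi_def qmul_def tau_def sum_lessThan_3 dot3_def col_def comp3_def algebra_simps)

lemma Psi_outside: "F \<in> S1cube d \<Longrightarrow> \<not> (i \<le> j \<and> j < d) \<Longrightarrow> Psi d v F i j = 0"
  by (auto simp: Psi_def qmul_def tau_def S1cube_def intro!: sum.neutral)

lemma Psi_mem_IC2: "F \<in> S1cube d \<Longrightarrow> Psi d v F \<in> IC2 d v"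
  unfolding IC2_def Psi_def by blast

lemma PsiPre_iff:
  assumes "3 \<le> d"
  shows "F \<in> PsiPre d v \<longleftrightarrow> F \<in> S1cube d \<and>
    (\<forall>i<d. dot3 (col F i) (hvert d v i) = 0 \<and>
       dot3 (col F i) (hvert d v (Suc i)) + dot3 (col F (Suc i mod d)) (hvert d v i) = 0)"
    (is "_ \<longleftrightarrow> _ \<and> (\<forall>i<d. ?vertex i \<and> ?edge i)")
proof
  assume F: "F \<in> PsiPre d v"
  then have S: "F \<in> S1cube d" and D: "\<And>i j. \<not> diag_mono d i j \<Longrightarrow> Psi d v F i j = 0"
    by (auto simp: PsiPre_def Dspace_def)
  have "?vertex i \<and> ?edge i" if "i < d" for i
  proof
    show "?vertex i" using D[of i i] Psi_diag[OF that, of v F] by (simp add: diag_mono_def)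
    show "?edge i"
    proof (cases "Suc i < d")
      case True
      then show ?thesis using D[of i "Suc i"] Psi_offdiag[of i "Suc i" d v F] by (simp add: diag_mono_def)
    next
      case False
      with that have "Suc i = d" by simp
      then have "i = d - 1" "Suc i mod d = 0" "hvert d v (Suc i) = hvert d v 0"
        by (auto simp: hvert_def)
      then show ?thesis using D[of 0 "d - 1"] Psi_offdiag[of 0 "d - 1" d v F] assms
        by (simp add: diag_mono_def add.commute)
    qed
  qed
  with S show "F \<in> S1cube d \<and> (\<forall>i<d. ?vertex i \<and> ?edge i)" by blast
next
  assume "F \<in> S1cube d \<and> (\<forall>i<d. ?vertex i \<and> ?edge i)"
  then have S: "F \<in> S1cube d" and V: "\<And>i. i < d \<Longrightarrow> ?vertex i"
    and E: "\<And>i. i < d \<Longrightarrow> ?edge i" by auto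
  have "Psi d v F i j = 0" if "\<not> diag_mono d i j" for i j
  proof (cases "i < j \<and> j < d")
    case False
    then show ?thesis using Psi_outside[OF S] Psi_diag V by (metis le_neq_implies_less)
  next
    case True
    with that consider "j = Suc i" | "i = 0" "j = d - 1" by (auto simp: diag_mono_def)
    then show ?thesis
    proof cases
      case 1
      then show ?thesis using E[of i] True Psi_offdiag[of i j d v F] by simp
    next
      case 2
      then have "Suc (d - 1) mod d = 0" "hvert d v (Suc (d - 1)) = hvert d v 0"
        using assms by (auto simp: hvert_def)
      then show ?thesis using E[of "d - 1"] 2 True Psi_offdiag[of i j d v F] by (simp add: add.commute)
    qed
  qed
  then show "F \<in> PsiPre d v" using S Psi_mem_IC2 by (auto simp: PsiPre_def Dspace_def)
qed

lemma Lambda_entry: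
  assumes "k < d" "i < d"
  shows "Lambda d v k c i =
    (if k = cyc_pred d i then comp3 (nvec d v i) c / alpha d v i else 0)
  - (if k = i then comp3 (nvec d v (i + d - 1)) c / alpha d v i else 0)"
proof -
  have "0 < d" using assms by simp
  then have "nvec d v (Suc k) = nvec d v i" "alpha d v (Suc k) = alpha d v i" if "i = Suc k mod d"
    using that by (metis nvec_mod, metis alpha_mod)
  then show ?thesis
    using assms Suc_mod_eq_iff_cyc_pred[OF assms] by (auto simp: Lambda_def)
qed

lemma dot3_col_Lambda:
  assumes "k < d" "i < d"
  shows "dot3 (col (Lambda d v k) i) p =
    (if k = cyc_pred d i then det3 (hvert d v i) (hvert d v (Suc i)) p / alpha d v i else 0)
  - (if k = i then det3 (hvert d v (i + d - 1)) (hvert d v i) p / alpha d v i else 0)"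
  using assms
  by (simp add: dot3_col Lambda_entry[OF assms] nvec_pred nvec_def flip: dot3_cross3)
     (simp add: dot3_eq_sum_comp3 sum_subtractf sum_negf sum_divide_distrib left_diff_distrib)

lemma Lambda_dot_vertex:
  assumes "k < d" "i < d"
  shows "dot3 (col (Lambda d v k) i) (hvert d v i) = 0"
  by (simp add: dot3_col_Lambda[OF assms])

lemma Lambda_dot_next_vertex:
  assumes "k < d" "i < d" "alpha d v i \<noteq> 0"
  shows "dot3 (col (Lambda d v k) i) (hvert d v (Suc i)) = (if k = i then -1 else 0)"
proof -
  have "det3 (hvert d v (i + d - 1)) (hvert d v i) (hvert d v (Suc i)) = alpha d v i"
    by (simp add: alpha_def)
  then show ?thesis using assms(3) by (simp add: dot3_col_Lambda[OF assms(1,2)])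
qed

lemma Lambda_dot_prev_vertex:
  assumes "k < d" "i < d" "alpha d v (Suc i mod d) \<noteq> 0"
  shows "dot3 (col (Lambda d v k) (Suc i mod d)) (hvert d v i) = (if k = i then 1 else 0)"
proof -
  define j where "j = Suc i mod d"
  have j: "j < d" "cyc_pred d j = i" using assms(2) by (simp_all add: j_def cyc_pred_Suc_mod)
  then have prev: "hvert d v (j + d - 1) = hvert d v i" by (metis hvert_cyc_pred)
  have "det3 (hvert d v j) (hvert d v (Suc j)) (hvert d v i) = alpha d v j"
    unfolding alpha_def prev by (rule det3_rotate[symmetric])
  then show ?thesis
    using assms(3) unfolding dot3_col_Lambda[OF assms(1) j(1)] prev j_def[symmetric]
    by (simp add: j)
qed

lemma Lambda_in_S1cube:
  assumes "k < d"
  shows "Lambda d v k \<in> S1cube d"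
proof -
  have "Suc k mod d < d" using assms by simp
  then show ?thesis using assms unfolding S1cube_def Lambda_def comp3_def
    by (auto dest: leD)
qed

lemma comp3_col: "c < 3 \<Longrightarrow> comp3 (col F i) c = F c i"
  by (auto simp: comp3_def col_def less_Suc_eq numeral_3_eq_3)

lemma dot3_col_sum:
  "dot3 (col (\<lambda>c i. \<Sum>k\<in>A. a k * B k c i) i) p = (\<Sum>k\<in>A. a k * dot3 (col (B k) i) p)"
  unfolding dot3_col sum_distrib_left sum_distrib_right mult.assoc by (rule sum.swap)

lemma Lambda_mem_PsiPre:
  fixes v :: "nat \<Rightarrow> 'a::linordered_field \<times> 'a"
  assumes conv: "convex_polygon d v" and k: "k < d"
  shows "Lambda d v k \<in> PsiPre d v"
proof -
  have d: "3 \<le> d" using conv by (simp add: convex_polygon_def)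
  have "dot3 (col (Lambda d v k) i) (hvert d v i) = 0 \<and>
      dot3 (col (Lambda d v k) i) (hvert d v (Suc i))
      + dot3 (col (Lambda d v k) (Suc i mod d)) (hvert d v i) = 0" if i: "i < d" for i
  proof -
    have "Suc i mod d < d" using i by simp
    then show ?thesis
      using Lambda_dot_vertex[OF k i, of v]
        Lambda_dot_next_vertex[OF k i alpha_nonzero[OF conv i]]
        Lambda_dot_prev_vertex[OF k i alpha_nonzero[OF conv]]
      by simp
  qed
  then show ?thesis
    unfolding PsiPre_iff[OF d] using Lambda_in_S1cube[OF k] by blast
qed

lemma Lambda_linearly_independent:
  fixes v :: "nat \<Rightarrow> 'a::linordered_field \<times> 'a"
  assumes conv: "convex_polygon d v"
    and zero: "(\<lambda>c i. \<Sum>k<d. a k * Lambda d v k c i) = (\<lambda>c i. 0)" and "i < d"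
  shows "a i = 0"
proof -
  have "0 = dot3 (col (\<lambda>c i. \<Sum>k<d. a k * Lambda d v k c i) i) (hvert d v (Suc i))"
    by (simp add: zero dot3_def col_def)
  also have "\<dots> = (\<Sum>k<d. a k * (if k = i then -1 else 0))"
    unfolding dot3_col_sum using \<open>i < d\<close> alpha_nonzero[OF conv \<open>i < d\<close>]
    by (intro sum.cong) (simp_all add: Lambda_dot_next_vertex)
  also have "\<dots> = - a i"
    using \<open>i < d\<close> by (simp add: if_distrib[of "(*) _"] cong: if_cong)
  finally show ?thesis by simp
qed

lemma PsiPre_Lambda_expansion:
  fixes v :: "nat \<Rightarrow> 'a::linordered_field \<times> 'a"
  assumes conv: "convex_polygon d v" and F: "F \<in> PsiPre d v"
  shows "F = (\<lambda>c i. \<Sum>k<d. - dot3 (col F k) (hvert d v (Suc k)) * Lambda d v k c i)"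
    (is "_ = (\<lambda>c i. \<Sum>k<d. ?a k * _)")
proof (intro ext)
  fix c i
  have d: "3 \<le> d" using conv by (simp add: convex_polygon_def)
  note F' = F[unfolded PsiPre_iff[OF d]]
  show "F c i = (\<Sum>k<d. ?a k * Lambda d v k c i)"
  proof (cases "c < 3 \<and> i < d")
    case False
    then have "F c i = 0" "\<And>k. k < d \<Longrightarrow> Lambda d v k c i = 0"
      using F' Lambda_in_S1cube[of _ d v] by (auto simp: S1cube_def not_less)
    then show ?thesis by simp
  next
    case True
    then have c: "c < 3" and i: "i < d" by auto
    define p where "p = cyc_pred d i"
    have p: "p < d" "Suc p mod d = i" "hvert d v p = hvert d v (i + d - 1)"
      using i d Suc_mod_eq_iff_cyc_pred[of p d i] by (auto simp: p_def cyc_pred_less)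
    let ?u = "hvert d v (i + d - 1)" and ?v = "hvert d v i" and ?w = "hvert d v (Suc i)"
    have "(\<Sum>k<d. ?a k * Lambda d v k c i)
        = (?a p * comp3 (nvec d v i) c - ?a i * comp3 (nvec d v (i + d - 1)) c) / alpha d v i"
    proof -
      have "(\<Sum>k<d. ?a k * Lambda d v k c i)
          = (\<Sum>k<d. (if k = p then ?a p * comp3 (nvec d v i) c / alpha d v i else 0)
                    - (if k = i then ?a i * comp3 (nvec d v (i + d - 1)) c / alpha d v i else 0))"
        using i by (intro sum.cong) (auto simp: Lambda_entry right_diff_distrib p_def)
      then show ?thesis using i p(1) by (simp add: sum_subtractf diff_divide_distrib)
    qed
    also have "?a p = dot3 (col F i) ?u" \<comment> \<open>the edge condition at \<open>p = i - 1\<close>\<close>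
      using F' p by (metis add_eq_0_iff hvert_Suc_mod)
    also have "nvec d v i = cross3 ?v ?w" by (simp add: nvec_def)
    also have "nvec d v (i + d - 1) = cross3 ?u ?v"
      using i by (intro nvec_pred) simp
    also have "dot3 (col F i) ?u * comp3 (cross3 ?v ?w) c - ?a i * comp3 (cross3 ?u ?v) c
        = alpha d v i * F c i"
      using cross3_expansion[OF c, of ?u ?v ?w "col F i"] F' i
      by (simp add: alpha_def comp3_col[OF c])
    finally show ?thesis using alpha_nonzero[OF conv i] by simp
  qed
qed

text \<open>Convexity is used only through \<open>\<alpha>_i \<noteq> 0\<close>.\<close>

theorem lemma3p6:
  fixes d :: nat and v :: "nat \<Rightarrow> 'a::linordered_field \<times> 'a"
  assumes "4 \<le> d"
    and "convex_polygon d v"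
    and "no_three_edge_lines_concurrent d v"
  shows "is_basis_family d (Lambda d v) (PsiPre d v)"
  unfolding is_basis_family_def
proof (intro conjI allI impI ballI)
  show "Lambda d v k \<in> PsiPre d v" if "k < d" for k
    using Lambda_mem_PsiPre[OF assms(2) that] .
  show "a k = 0" if "(\<lambda>c i. \<Sum>k<d. a k * Lambda d v k c i) = (\<lambda>c i. 0)" "k < d" for a k
    using Lambda_linearly_independent[OF assms(2) that] .
  show "\<exists>a. F = (\<lambda>c i. \<Sum>k<d. a k * Lambda d v k c i)" if "F \<in> PsiPre d v" for F
    using PsiPre_Lambda_expansion[OF assms(2) that]
    by (intro exI[where x = "\<lambda>k. - dot3 (col F k) (hvert d v (Suc k))"])
qed

end
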